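(* For every integer $k\ge1$, $$(\widetilde{\mathbb P}_k)^3=\widetilde{\mathbb S}^*_k\oplus\widetilde{\mathbb I}^*_k\oplus\widetilde{\mathbb H}_k,$$ i.e. every $\mathbf V\in(\widetilde{\mathbb P}_k)^3$ can be written uniquely as $\mathbf V=\mathbf F+\mathbf G+\mathbf H$ with $(\mathbf F,\mathbf G,\mathbf H)\in\widetilde{\mathbb S}^*_k\times\widetilde{\mathbb I}^*_k\times\widetilde{\mathbb H}_k$. Moreover $(\widetilde{\mathbb P}_0)^3=\widetilde{\mathbb H}_0$.
   Context: $\widetilde{\mathbb P}_l$ denotes the space of real homogeneous polynomials of degree $l$ in three variables. For $k\ge1$, $\widetilde{\mathbb S}_k=\{\mathbf\Phi\in(\widetilde{\mathbb P}_k)^3:\nabla\cdot\mathbf\Phi=0\}$, $\widetilde{\mathbb I}_k=\{\mathbf\Phi\in(\widetilde{\mathbb P}_k)^3:\nabla\times\mathbf\Phi=0\}$, $\widetilde{\mathbb H}_k=\widetilde{\mathbb S}_k\cap\widetilde{\mathbb I}_k$, and $\widetilde{\mathbb H}_0=(\widetilde{\mathbb P}_0)^3$. $\widetilde{\mathbb S}^*_k$ and $\widetilde{\mathbb I}^*_k$ denote (arbitrary but fixed) complements of $\widetilde{\mathbb H}_k$ in $\widetilde{\mathbb S}_k$ and in $\widetilde{\mathbb I}_k$ respectively, i.e. $\widetilde{\mathbb S}_k=\widetilde{\mathbb S}^*_k\oplus\widetilde{\mathbb H}_k$ and $\widetilde{\mathbb I}_k=\widetilde{\mathbb I}^*_k\oplus\widetilde{\mathbb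 H}_k$. *)

theory Defs
  imports "HOL-Analysis.Analysis"
begin

(* A real polynomial in three variables x1,x2,x3 is represented by its coefficient
   function: p (a,b,c) is the coefficient of x1^a x2^b x3^c (finitely supported).
   A polynomial vector field (Phi_1,Phi_2,Phi_3) is represented by
   V :: monomial => real^3, with (V m) $ i the coefficient of monomial m in Phi_i. *)

type_synonym mono = "nat \<times> nat \<times> nat"
type_synonym cpoly = "mono \<Rightarrow> real"
type_synonym vfield = "mono \<Rightarrow> real^3"

fun mdeg :: "mono \<Rightarrow> nat" where
  "mdeg (a, b, c) = a + b + c"

definition hom_poly :: "nat \<Rightarrow> cpoly \<Rightarrow> bool" where
  "hom_poly k p \<longleftrightarrow> (\<forall>m. p m \<noteq> 0 \<longrightarrow> mdeg m = k)"

definition Pk3 :: "nat \<Rightarrow> vfield set" where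
  "Pk3 k = {V. \<forall>i. hom_poly k (\<lambda>m. V m $ i)}"

fun dx1 :: "cpoly \<Rightarrow> cpoly" where
  "dx1 p (a, b, c) = real (Suc a) * p (Suc a, b, c)"
fun dx2 :: "cpoly \<Rightarrow> cpoly" where
  "dx2 p (a, b, c) = real (Suc b) * p (a, Suc b, c)"
fun dx3 :: "cpoly \<Rightarrow> cpoly" where
  "dx3 p (a, b, c) = real (Suc c) * p (a, b, Suc c)"

definition comp :: "vfield \<Rightarrow> 3 \<Rightarrow> cpoly" where
  "comp V i = (\<lambda>m. V m $ i)"

definition vdiv :: "vfield \<Rightarrow> cpoly" where
  "vdiv V = (\<lambda>m. dx1 (comp V 1) m + dx2 (comp V 2) m + dx3 (comp V 3) m)"

definition vcurl :: "vfield \<Rightarrow> vfield" where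
  "vcurl V = (\<lambda>m. vector [dx2 (comp V 3) m - dx3 (comp V 2) m,
                            dx3 (comp V 1) m - dx1 (comp V 3) m,
                            dx1 (comp V 2) m - dx2 (comp V 1) m])"

definition vadd :: "vfield \<Rightarrow> vfield \<Rightarrow> vfield" where
  "vadd F G = (\<lambda>m. F m + G m)"

definition vscale :: "real \<Rightarrow> vfield \<Rightarrow> vfield" where
  "vscale c F = (\<lambda>m. c *\<^sub>R F m)"

definition vzero :: vfield where
  "vzero = (\<lambda>m. 0)"

definition Sk :: "nat \<Rightarrow> vfield set" where
  "Sk k = {V \<in> Pk3 k. vdiv V = (\<lambda>m. 0)}"

definition Ik :: "nat \<Rightarrow> vfield set" where
  "Ik k = {V \<in> Pk3 k. vcurl V = vzero}"

definition Hk :: "nat \<Rightarrow> vfield set" where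
  "Hk k = (if k = 0 then Pk3 0 else Sk k \<inter> Ik k)"

definition lin_subspace :: "vfield set \<Rightarrow> bool" where
  "lin_subspace U \<longleftrightarrow> vzero \<in> U \<and> (\<forall>x\<in>U. \<forall>y\<in>U. vadd x y \<in> U)
      \<and> (\<forall>c. \<forall>x\<in>U. vscale c x \<in> U)"

definition is_complement :: "vfield set \<Rightarrow> vfield set \<Rightarrow> vfield set \<Rightarrow> bool" where
  "is_complement C H W \<longleftrightarrow> lin_subspace C \<and> C \<subseteq> W \<and> C \<inter> H = {vzero}
      \<and> W = {vadd x y | x y. x \<in> C \<and> y \<in> H}"

end

theory Submission
  imports Defs "HOL-Library.Function_Algebras"
begin

(*
  Put q = div V, homogeneous of degree k - 1. Comparing coefficients, the equation \<Delta>P = q can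
  always be solved by a homogeneous P of degree k + 1, so V = (V - \<nabla>P) + \<nabla>P writes V as a
  divergence-free plus a curl-free field: (P~_k)^3 = S~_k + I~_k. As H~_k = S~_k \<inter> I~_k, splitting
  each summand along its complement of H~_k gives the decomposition. It is unique because two
  decompositions differ in the S*-part by a field of S*_k that is also curl-free, hence lies in
  S*_k \<inter> H~_k = 0; the same then holds for the I*-part.
*)

lemma vadd_eq_plus: "vadd F G = F + G"
  by (simp add: vadd_def plus_fun_def)

lemma vzero_eq_zero: "vzero = 0"
  by (simp add: vzero_def zero_fun_def)

lemma lin_subspace_add: "lin_subspace U \<Longrightarrow> x \<in> U \<Longrightarrow> y \<in> U \<Longrightarrow> x + y \<in> U"
  by (simp add: lin_subspace_def vadd_eq_plus)

lemma lin_subspace_uminus: "lin_subspace U \<Longrightarrow> x \<in> U \<Longrightarrow> - x \<in> U"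
  unfolding lin_subspace_def by (metis scaleR_minus1_left vscale_def uminus_apply ext)

lemma lin_subspace_diff: "lin_subspace U \<Longrightarrow> x \<in> U \<Longrightarrow> y \<in> U \<Longrightarrow> x - y \<in> U"
  using lin_subspace_add lin_subspace_uminus by (metis diff_conv_add_uminus)

lemma decomposition_along_complements_unique:
  assumes S: "lin_subspace S" and I: "lin_subspace I"
    and cS: "is_complement Sstar (S \<inter> I) S" and cI: "is_complement Istar (S \<inter> I) I"
    and F: "F \<in> Sstar" "F' \<in> Sstar" and G: "G \<in> Istar" "G' \<in> Istar"
    and H: "H \<in> S \<inter> I" "H' \<in> S \<inter> I"
    and eq: "F + G + H = F' + G' + H'"
  shows "F = F' \<and> G = G' \<and> H = H'"
proof -
  have Sstar: "lin_subspace Sstar" "Sstar \<subseteq> S" "Sstar \<inter> (S \<inter> I) = {0}"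
    and Istar: "lin_subspace Istar" "Istar \<subseteq> I" "Istar \<inter> (S \<inter> I) = {0}"
    using cS cI by (auto simp: is_complement_def vzero_eq_zero)
  have "F - F' = (G' - G) + (H' - H)"
    using eq by (simp add: algebra_simps)
  also have "\<dots> \<in> I"
    using I G H Istar(2) by (blast intro: lin_subspace_add lin_subspace_diff)
  finally have "F - F' \<in> S \<inter> I"
    using S F Sstar(2) lin_subspace_diff by blast
  moreover have "F - F' \<in> Sstar"
    using Sstar(1) F by (rule lin_subspace_diff)
  ultimately have FF': "F = F'"
    using Sstar(3) by (metis IntI eq_iff_diff_eq_0 singletonD)
  have "G - G' = H' - H"
    using eq FF' by (simp add: algebra_simps)
  also have "\<dots> \<in> S \<inter> I"
    using S I H by (blast intro: lin_subspace_diff)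
  finally have "G = G'"
    using Istar(3) lin_subspace_diff[OF Istar(1) G] by (metis IntI eq_iff_diff_eq_0 singletonD)
  with FF' eq show ?thesis
    by simp
qed

lemma decomposition_along_complements_exists:
  assumes S: "lin_subspace S" and I: "lin_subspace I"
    and cS: "is_complement Sstar (S \<inter> I) S" and cI: "is_complement Istar (S \<inter> I) I"
    and "A \<in> S" "B \<in> I"
  obtains F G H where "F \<in> Sstar" "G \<in> Istar" "H \<in> S \<inter> I" "A + B = F + G + H"
proof -
  obtain F H1 where F: "F \<in> Sstar" "H1 \<in> S \<inter> I" "A = F + H1"
    using cS \<open>A \<in> S\<close> unfolding is_complement_def vadd_eq_plus by blast
  obtain G H2 where G: "G \<in> Istar" "H2 \<in> S \<inter> I" "B = G + H2"
    using cI \<open>B \<in> I\<close> unfolding is_complement_def vadd_eq_plus by blast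
  have "H1 + H2 \<in> S \<inter> I"
    using S I F(2) G(2) by (blast intro: lin_subspace_add)
  moreover have "A + B = F + G + (H1 + H2)"
    using F(3) G(3) by (simp add: algebra_simps)
  ultimately show thesis
    using that F(1) G(1) by blast
qed

lemma decomposition_along_complements:
  assumes "lin_subspace S" "lin_subspace I"
    and "is_complement Sstar (S \<inter> I) S" "is_complement Istar (S \<inter> I) I"
    and "A \<in> S" "B \<in> I"
  shows "\<exists>!(F, G, H). F \<in> Sstar \<and> G \<in> Istar \<and> H \<in> S \<inter> I \<and> A + B = F + G + H"
proof -
  obtain F G H where "F \<in> Sstar" "G \<in> Istar" "H \<in> S \<inter> I" "A + B = F + G + H"
    using decomposition_along_complements_exists[OF assms] .
  moreover have "(F', G', H') = (F, G, H)"
    if "F' \<in> Sstar" "G' \<in> Istar" "H' \<in> S \<inter> I" "A + B = F' + G' + H'" for F' G' H'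
    using decomposition_along_complements_unique[OF assms(1-4)] that calculation by metis
  ultimately show ?thesis
    by (intro ex1I[of _ "(F, G, H)"]) auto
qed

lemma hom_poly_add: "hom_poly k p \<Longrightarrow> hom_poly k q \<Longrightarrow> hom_poly k (\<lambda>m. p m + q m)"
  unfolding hom_poly_def by (metis add.left_neutral)

lemma hom_poly_scale: "hom_poly k p \<Longrightarrow> hom_poly k (\<lambda>m. c * p m)"
  unfolding hom_poly_def by fastforce

lemma lin_subspace_Pk3: "lin_subspace (Pk3 k)"
  unfolding lin_subspace_def Pk3_def vadd_def vscale_def vzero_def
  by (simp add: hom_poly_add hom_poly_scale) (simp add: hom_poly_def)

lemma lin_subspace_kernel:
  fixes L :: "vfield \<Rightarrow> 'a \<Rightarrow> 'b::real_vector"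
  assumes "lin_subspace U"
    and add: "\<And>x y. L (vadd x y) = (\<lambda>m. L x m + L y m)"
    and scale: "\<And>c x. L (vscale c x) = (\<lambda>m. c *\<^sub>R L x m)"
  shows "lin_subspace {V \<in> U. L V = (\<lambda>m. 0)}"
proof -
  have "L vzero = L (vscale 0 vzero)"
    by (simp add: vscale_def vzero_def)
  then have "L vzero = (\<lambda>m. 0)"
    by (simp add: scale)
  then show ?thesis
    using assms(1) by (simp add: lin_subspace_def add scale)
qed

lemma vdiv_add: "vdiv (vadd x y) = (\<lambda>m. vdiv x m + vdiv y m)"
  by (rule ext, case_tac m) (simp add: vdiv_def comp_def vadd_def algebra_simps)

lemma vdiv_scale: "vdiv (vscale c x) = (\<lambda>m. c *\<^sub>R vdiv x m)"
  by (rule ext, case_tac m) (simp add: vdiv_def comp_def vscale_def algebra_simps)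

lemma vdiv_diff: "vdiv (V - W) = (\<lambda>m. vdiv V m - vdiv W m)"
  by (rule ext, case_tac m) (simp add: vdiv_def comp_def algebra_simps)

lemma vcurl_add: "vcurl (vadd x y) = (\<lambda>m. vcurl x m + vcurl y m)"
  by (rule ext, case_tac m) (simp add: vcurl_def comp_def vadd_def algebra_simps vec_eq_iff forall_3)

lemma vcurl_scale: "vcurl (vscale c x) = (\<lambda>m. c *\<^sub>R vcurl x m)"
  by (rule ext, case_tac m) (simp add: vcurl_def comp_def vscale_def algebra_simps vec_eq_iff forall_3)

lemma lin_subspace_Sk: "lin_subspace (Sk k)"
  unfolding Sk_def using lin_subspace_kernel[OF lin_subspace_Pk3 vdiv_add vdiv_scale] .

lemma lin_subspace_Ik: "lin_subspace (Ik k)"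
  unfolding Ik_def vzero_def using lin_subspace_kernel[OF lin_subspace_Pk3 vcurl_add vcurl_scale] .

definition grad :: "cpoly \<Rightarrow> vfield" where
  "grad p = (\<lambda>m. vector [dx1 p m, dx2 p m, dx3 p m])"

definition laplacian :: "cpoly \<Rightarrow> cpoly" where
  "laplacian p = (\<lambda>m. dx1 (dx1 p) m + dx2 (dx2 p) m + dx3 (dx3 p) m)"

lemma vdiv_grad: "vdiv (grad p) = laplacian p"
  by (simp add: vdiv_def grad_def laplacian_def comp_def)

lemma vcurl_grad: "vcurl (grad p) = vzero"
proof -
  have "dx1 (dx2 p) m = dx2 (dx1 p) m" "dx1 (dx3 p) m = dx3 (dx1 p) m"
    "dx2 (dx3 p) m = dx3 (dx2 p) m" for m
    by (cases m; simp)+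
  then show ?thesis
    by (simp add: vcurl_def grad_def comp_def vzero_def fun_eq_iff vec_eq_iff forall_3)
qed

lemma hom_poly_dx1: "hom_poly (Suc k) p \<Longrightarrow> hom_poly k (dx1 p)"
  and hom_poly_dx2: "hom_poly (Suc k) p \<Longrightarrow> hom_poly k (dx2 p)"
  and hom_poly_dx3: "hom_poly (Suc k) p \<Longrightarrow> hom_poly k (dx3 p)"
  unfolding hom_poly_def by (intro allI impI, case_tac m, force)+

lemma grad_in_Pk3: "hom_poly (Suc k) p \<Longrightarrow> grad p \<in> Pk3 k"
  unfolding Pk3_def grad_def
  using hom_poly_dx1 hom_poly_dx2 hom_poly_dx3 by (auto simp: forall_3)

lemma hom_poly_vdiv:
  assumes "V \<in> Pk3 (Suc k)"
  shows "hom_poly k (vdiv V)"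
  unfolding vdiv_def comp_def
  using assms hom_poly_dx1 hom_poly_dx2 hom_poly_dx3 hom_poly_add by (simp add: Pk3_def)

(*
  The x1^a x2^b x3^c coefficient of \<Delta>P is (a+1)(a+2) P(a+2,b,c) + (b+1)(b+2) P(a,b+2,c)
  + (c+1)(c+2) P(a,b,c+2); solving for the first term defines P by recursion on the exponent
  of x1, starting from P = 0 where that exponent is 0 or 1.
*)
function inv_laplacian :: "cpoly \<Rightarrow> cpoly" where
  "inv_laplacian q (Suc (Suc a), b, c) =
     (q (a, b, c) - real ((b + 1) * (b + 2)) * inv_laplacian q (a, b + 2, c)
        - real ((c + 1) * (c + 2)) * inv_laplacian q (a, b, c + 2)) / real ((a + 1) * (a + 2))"
| "inv_laplacian q (0, b, c) = 0"
| "inv_laplacian q (Suc 0, b, c) = 0"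
  by pat_completeness auto
termination by (relation "measures [\<lambda>(q, a, b, c). a]") auto

lemma laplacian_inv_laplacian: "laplacian (inv_laplacian q) = q"
proof
  fix m :: mono
  obtain a b c where m: "m = (a, b, c)"
    by (cases m)
  have "laplacian (inv_laplacian q) m =
      real ((a + 1) * (a + 2)) * inv_laplacian q (Suc (Suc a), b, c)
      + real ((b + 1) * (b + 2)) * inv_laplacian q (a, b + 2, c)
      + real ((c + 1) * (c + 2)) * inv_laplacian q (a, b, c + 2)"
    by (simp add: m laplacian_def numeral_2_eq_2 algebra_simps)
  also have "\<dots> = q m"
    by (simp add: m del: of_nat_mult)
  finally show "laplacian (inv_laplacian q) m = q m" .
qed

lemma hom_poly_inv_laplacian:
  assumes "hom_poly k q"
  shows "hom_poly (k + 2) (inv_laplacian q)"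
  unfolding hom_poly_def
proof (intro allI impI)
  fix m
  assume "inv_laplacian q m \<noteq> 0"
  with assms show "mdeg m = k + 2"
  proof (induction q m rule: inv_laplacian.induct)
    case (1 q a b c)
    have "q (a, b, c) \<noteq> 0 \<or> inv_laplacian q (a, b + 2, c) \<noteq> 0
        \<or> inv_laplacian q (a, b, c + 2) \<noteq> 0"
      by (rule ccontr) (use "1.prems"(2) in simp)
    moreover have "a + b + c = k" if "q (a, b, c) \<noteq> 0"
      using "1.prems"(1) that by (auto simp: hom_poly_def)
    ultimately show ?case
      using "1.IH" "1.prems"(1) by fastforce
  qed simp_all
qed

lemma Pk3_Suc_decomp_Sk_Ik:
  assumes "V \<in> Pk3 (Suc k)"
  obtains F G where "F \<in> Sk (Suc k)" "G \<in> Ik (Suc k)" "V = F + G"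
proof -
  define P where "P = inv_laplacian (vdiv V)"
  have "hom_poly (Suc (Suc k)) P"
    using hom_poly_inv_laplacian[OF hom_poly_vdiv[OF assms]] by (simp add: P_def)
  then have grad_P: "grad P \<in> Pk3 (Suc k)"
    by (rule grad_in_Pk3)
  then have "grad P \<in> Ik (Suc k)"
    by (simp add: Ik_def vcurl_grad)
  moreover have "V - grad P \<in> Sk (Suc k)"
    using lin_subspace_diff[OF lin_subspace_Pk3 assms grad_P]
    by (simp add: Sk_def vdiv_diff vdiv_grad laplacian_inv_laplacian P_def)
  ultimately show thesis
    using that by fastforce
qed

theorem mainTheorem9:
  shows "(\<forall>k::nat. \<forall>Sstar Istar. k \<ge> 1 \<longrightarrow>
            is_complement Sstar (Hk k) (Sk k) \<longrightarrow>
            is_complement Istar (Hk k) (Ik k) \<longrightarrow>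
            (\<forall>V \<in> Pk3 k. \<exists>!(F, G, H). F \<in> Sstar \<and> G \<in> Istar \<and> H \<in> Hk k \<and>
                 V = vadd (vadd F G) H))
         \<and> Pk3 0 = Hk 0"
proof (intro conjI allI impI ballI)
  fix k :: nat and Sstar Istar V
  assume "k \<ge> 1" and complements: "is_complement Sstar (Hk k) (Sk k)" "is_complement Istar (Hk k) (Ik k)"
    and "V \<in> Pk3 k"
  then obtain k' where k: "k = Suc k'"
    by (cases k) auto
  then have Hk: "Hk k = Sk k \<inter> Ik k"
    by (simp add: Hk_def)
  obtain A B where "A \<in> Sk k" "B \<in> Ik k" "V = A + B"
    using Pk3_Suc_decomp_Sk_Ik \<open>V \<in> Pk3 k\<close> unfolding k by blast
  with decomposition_along_complements[OF lin_subspace_Sk lin_subspace_Ik]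
  show "\<exists>!(F, G, H). F \<in> Sstar \<and> G \<in> Istar \<and> H \<in> Hk k \<and> V = vadd (vadd F G) H"
    using complements unfolding Hk vadd_eq_plus by simp
qed (simp add: Hk_def)

end
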